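(* Let $T$ be a c.n.u. contraction on $H$ and $x\in\mathbb{K}$. Then $\widehat{Tx}(\lambda)=\lambda\hat x(\lambda)$ for each $\lambda\in\mathbb{D}_+$, and $\widehat{Tx}(\lambda)=\hat x(\lambda)/\lambda$ for each $\lambda\in\mathbb{D}_-\setminus\{0_-\}$; more precisely $\hat x(\lambda)=\lambda\widehat{Tx}(\lambda)$ for all $\lambda\in\mathbb{D}_-$, and in particular $\hat x(0_-)=0$.
   Context: $H$ is an infinite-dimensional separable complex Hilbert space with inner product $(\cdot,\cdot)_H$; $T\in\mathbb{B}(H)$, $\|T\|\le1$, is completely non-unitary. $\mathbb{K}=\ker(I-T^*T)$. $\mathbb{H}=H\oplus_\perp H$ with $[(x_1,x_2),(y_1,y_2)]=i(x_1,y_1)_H-i(x_2,y_2)_H$; $S^{\perp_s}=\{a:[a,b]=0\ \forall b\in S\}$; $A_T=\{(x,Tx):x\in\mathbb{K}\}$. $\mathbb{D}_\pm$ are two copies of the open unit disc with centers $0_\pm$; for $\lambda\in\mathbb{D}_\pm$, $\bar\lambda$ is regarded as a point of $\mathbb{D}_\mp$. $N_\lambda=\{(x,\lambda x):x\in H\}\cap A_T^{\perp_s}$ for $\lambda\in\mathbb{D}_+$, and $N_\lambda=\{(\lambda x,x):x\in H\}\cap A_T^{\perp_s}$ for $\lambda\in\mathbb{D}_-$. Let $pr_1,pr_2$ be the projections of $\mathbb{H}$ onto its two copies of $H$; $E_\lambda=pr_1(N_\lambda)$ for $\lambda\in\mathbb{D}_+$ and $E_\lambda=pr_2(N_\lambda)$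 for $\lambda\in\mathbb{D}_-$. For $\lambda\in\mathbb{D}_+\cup\mathbb{D}_-$ set $F^\dagger_\lambda=E_{\bar\lambda}\subseteq H$, and let $F_\lambda$ be the space of continuous conjugate-linear functionals on $F^\dagger_\lambda$, with pairing $((\varphi,\omega))$. For $x\in H$, $\hat x$ is the section with $\hat x(\lambda)\in F_\lambda$ given by $((\hat x(\lambda),\omega))=(x,\omega)_H$ for $\omega\in F^\dagger_\lambda$. *)

theory Defs
  imports "HOL-Analysis.Analysis"
begin

text \<open>A complex Hilbert space is modelled abstractly: a carrier type 'h with its
additive group structure, a complex scalar multiplication sc and an inner product ip
(linear in the first argument, conjugate-linear in the second).\<close>

definition ipnorm :: "('h \<Rightarrow> 'h \<Rightarrow> complex) \<Rightarrow> 'h \<Rightarrow> real" where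
  "ipnorm ip x = sqrt (Re (ip x x))"

definition complex_inner_space ::
  "(complex \<Rightarrow> 'h::ab_group_add \<Rightarrow> 'h) \<Rightarrow> ('h \<Rightarrow> 'h \<Rightarrow> complex) \<Rightarrow> bool" where
  "complex_inner_space sc ip \<longleftrightarrow>
     (\<forall>a b x. sc a (sc b x) = sc (a * b) x) \<and> (\<forall>x. sc 1 x = x) \<and>
     (\<forall>a x y. sc a (x + y) = sc a x + sc a y) \<and> (\<forall>a b x. sc (a + b) x = sc a x + sc b x) \<and>
     (\<forall>x y z. ip (x + y) z = ip x z + ip y z) \<and> (\<forall>a x y. ip (sc a x) y = a * ip x y) \<and>
     (\<forall>x y. ip y x = cnj (ip x y)) \<and> (\<forall>x. 0 \<le> Re (ip x x)) \<and> (\<forall>x. ip x x = 0 \<longrightarrow> x = 0)"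

definition ip_complete :: "('h::ab_group_add \<Rightarrow> 'h \<Rightarrow> complex) \<Rightarrow> bool" where
  "ip_complete ip \<longleftrightarrow> (\<forall>f :: nat \<Rightarrow> 'h.
     (\<forall>e>0. \<exists>N. \<forall>m\<ge>N. \<forall>n\<ge>N. ipnorm ip (f m - f n) < e) \<longrightarrow>
     (\<exists>l. \<forall>e>0. \<exists>N. \<forall>n\<ge>N. ipnorm ip (f n - l) < e))"

definition ip_separable :: "('h::ab_group_add \<Rightarrow> 'h \<Rightarrow> complex) \<Rightarrow> bool" where
  "ip_separable ip \<longleftrightarrow> (\<exists>D. countable D \<and> (\<forall>x e. e > 0 \<longrightarrow> (\<exists>d\<in>D. ipnorm ip (x - d) < e)))"

definition ip_infinite_dim :: "('h \<Rightarrow> 'h \<Rightarrow> complex) \<Rightarrow> bool" where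
  "ip_infinite_dim ip \<longleftrightarrow> (\<exists>f :: nat \<Rightarrow> 'h. \<forall>m n. ip (f m) (f n) = (if m = n then 1 else 0))"

definition sep_hilbert_space ::
  "(complex \<Rightarrow> 'h::ab_group_add \<Rightarrow> 'h) \<Rightarrow> ('h \<Rightarrow> 'h \<Rightarrow> complex) \<Rightarrow> bool" where
  "sep_hilbert_space sc ip \<longleftrightarrow> complex_inner_space sc ip \<and> ip_complete ip \<and>
     ip_separable ip \<and> ip_infinite_dim ip"

definition bounded_op ::
  "(complex \<Rightarrow> 'h::ab_group_add \<Rightarrow> 'h) \<Rightarrow> ('h \<Rightarrow> 'h \<Rightarrow> complex) \<Rightarrow> ('h \<Rightarrow> 'h) \<Rightarrow> bool" where
  "bounded_op sc ip T \<longleftrightarrow> (\<forall>x y. T (x + y) = T x + T y) \<and> (\<forall>a x. T (sc a x) = sc a (T x)) \<and>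
     (\<exists>C. \<forall>x. ipnorm ip (T x) \<le> C * ipnorm ip x)"

definition contraction ::
  "(complex \<Rightarrow> 'h::ab_group_add \<Rightarrow> 'h) \<Rightarrow> ('h \<Rightarrow> 'h \<Rightarrow> complex) \<Rightarrow> ('h \<Rightarrow> 'h) \<Rightarrow> bool" where
  "contraction sc ip T \<longleftrightarrow> bounded_op sc ip T \<and> (\<forall>x. ipnorm ip (T x) \<le> ipnorm ip x)"

definition adj :: "('h \<Rightarrow> 'h \<Rightarrow> complex) \<Rightarrow> ('h \<Rightarrow> 'h) \<Rightarrow> ('h \<Rightarrow> 'h)" where
  "adj ip T = (THE S. \<forall>x y. ip (T x) y = ip x (S y))"

definition closed_subspace ::
  "(complex \<Rightarrow> 'h::ab_group_add \<Rightarrow> 'h) \<Rightarrow> ('h \<Rightarrow> 'h \<Rightarrow> complex) \<Rightarrow> 'h set \<Rightarrow> bool" where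
  "closed_subspace sc ip M \<longleftrightarrow> 0 \<in> M \<and> (\<forall>x\<in>M. \<forall>y\<in>M. x + y \<in> M) \<and> (\<forall>a. \<forall>x\<in>M. sc a x \<in> M) \<and>
     (\<forall>(f :: nat \<Rightarrow> 'h) l. (\<forall>n. f n \<in> M) \<and> (\<forall>e>0. \<exists>N. \<forall>n\<ge>N. ipnorm ip (f n - l) < e) \<longrightarrow> l \<in> M)"

definition cnu ::
  "(complex \<Rightarrow> 'h::ab_group_add \<Rightarrow> 'h) \<Rightarrow> ('h \<Rightarrow> 'h \<Rightarrow> complex) \<Rightarrow> ('h \<Rightarrow> 'h) \<Rightarrow> bool" where
  "cnu sc ip T \<longleftrightarrow> \<not> (\<exists>M. closed_subspace sc ip M \<and> M \<noteq> {0} \<and> T ` M \<subseteq> M \<and> adj ip T ` M \<subseteq> M \<and>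
       (\<forall>x\<in>M. adj ip T (T x) = x \<and> T (adj ip T x) = x))"

definition Kspace :: "('h::ab_group_add \<Rightarrow> 'h \<Rightarrow> complex) \<Rightarrow> ('h \<Rightarrow> 'h) \<Rightarrow> 'h set" where
  "Kspace ip T = {x. x - adj ip T (T x) = 0}"

definition kbr :: "('h \<Rightarrow> 'h \<Rightarrow> complex) \<Rightarrow> 'h \<times> 'h \<Rightarrow> 'h \<times> 'h \<Rightarrow> complex" where
  "kbr ip a b = \<i> * ip (fst a) (fst b) - \<i> * ip (snd a) (snd b)"

definition sorth :: "('h \<Rightarrow> 'h \<Rightarrow> complex) \<Rightarrow> ('h \<times> 'h) set \<Rightarrow> ('h \<times> 'h) set" where
  "sorth ip S = {a. \<forall>b\<in>S. kbr ip a b = 0}"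

definition A_T :: "('h::ab_group_add \<Rightarrow> 'h \<Rightarrow> complex) \<Rightarrow> ('h \<Rightarrow> 'h) \<Rightarrow> ('h \<times> 'h) set" where
  "A_T ip T = {(x, T x) | x. x \<in> Kspace ip T}"

text \<open>Points of the two discs: DPlus z is z in D_+, DMinus z is z in D_- (cmod z < 1 assumed
where relevant).\<close>
datatype dpt = DPlus complex | DMinus complex

fun dbar :: "dpt \<Rightarrow> dpt" where
  "dbar (DPlus z) = DMinus (cnj z)"
| "dbar (DMinus z) = DPlus (cnj z)"

fun Nsp :: "(complex \<Rightarrow> 'h::ab_group_add \<Rightarrow> 'h) \<Rightarrow> ('h \<Rightarrow> 'h \<Rightarrow> complex) \<Rightarrow> ('h \<Rightarrow> 'h) \<Rightarrow> dpt \<Rightarrow> ('h \<times> 'h) set" where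
  "Nsp sc ip T (DPlus z) = {(x, sc z x) | x. True} \<inter> sorth ip (A_T ip T)"
| "Nsp sc ip T (DMinus z) = {(sc z x, x) | x. True} \<inter> sorth ip (A_T ip T)"

fun Esp :: "(complex \<Rightarrow> 'h::ab_group_add \<Rightarrow> 'h) \<Rightarrow> ('h \<Rightarrow> 'h \<Rightarrow> complex) \<Rightarrow> ('h \<Rightarrow> 'h) \<Rightarrow> dpt \<Rightarrow> 'h set" where
  "Esp sc ip T (DPlus z) = fst ` Nsp sc ip T (DPlus z)"
| "Esp sc ip T (DMinus z) = snd ` Nsp sc ip T (DMinus z)"

definition Fdag :: "(complex \<Rightarrow> 'h::ab_group_add \<Rightarrow> 'h) \<Rightarrow> ('h \<Rightarrow> 'h \<Rightarrow> complex) \<Rightarrow> ('h \<Rightarrow> 'h) \<Rightarrow> dpt \<Rightarrow> 'h set" where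
  "Fdag sc ip T l = Esp sc ip T (dbar l)"

text \<open>Elements of F_lambda (conjugate-linear functionals on Fdag lambda) are represented as
functions 'h => complex that vanish outside Fdag lambda; scalar multiples act pointwise.
hat x lambda is the functional omega |-> (x, omega) on Fdag lambda.\<close>
definition hat :: "(complex \<Rightarrow> 'h::ab_group_add \<Rightarrow> 'h) \<Rightarrow> ('h \<Rightarrow> 'h \<Rightarrow> complex) \<Rightarrow> ('h \<Rightarrow> 'h) \<Rightarrow> 'h \<Rightarrow> dpt \<Rightarrow> ('h \<Rightarrow> complex)" where
  "hat sc ip T x l = (\<lambda>\<omega>. if \<omega> \<in> Fdag sc ip T l then ip x \<omega> else 0)"

end

theory Submission
  imports Defs
begin

text \<open>If \<open>\<omega> \<in> F\<^sup>\<dagger>\<^sub>\<lambda>\<close>, then the graph point of \<open>\<omega>\<close> over \<open>\<lambda>\<close> is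
Krein-orthogonal to \<open>(x, T x)\<close> for every \<open>x \<in> \<bbbK>\<close>; written out, this orthogonality
is exactly the relation between \<open>(x, \<omega>)\<close> and \<open>(T x, \<omega>)\<close> claimed by the theorem.
Nothing beyond the sesquilinearity of the inner product is used, and the identities hold
for every \<open>\<lambda>\<close>, not only in the open discs.\<close>

lemma complex_inner_space_ip_scaleC_left:
  "complex_inner_space sc ip \<Longrightarrow> ip (sc a x) y = a * ip x y"
  unfolding complex_inner_space_def by blast

lemma complex_inner_space_ip_cnj_commute:
  "complex_inner_space sc ip \<Longrightarrow> ip y x = cnj (ip x y)"
  unfolding complex_inner_space_def by blast

lemma sorth_A_T_ip_eq:
  assumes "(a, b) \<in> sorth ip (A_T ip T)" and "x \<in> Kspace ip T"
  shows "ip a x = ip b (T x)"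
proof -
  have "(x, T x) \<in> A_T ip T"
    using assms(2) unfolding A_T_def by blast
  with assms(1) have "\<i> * ip a x - \<i> * ip b (T x) = 0"
    unfolding sorth_def kbr_def by auto
  then show ?thesis
    by (simp add: right_diff_distrib[symmetric])
qed

lemma Fdag_DPlus_sorth:
  "\<omega> \<in> Fdag sc ip T (DPlus z) \<Longrightarrow> (sc (cnj z) \<omega>, \<omega>) \<in> sorth ip (A_T ip T)"
  by (auto simp: Fdag_def)

lemma Fdag_DMinus_sorth:
  "\<omega> \<in> Fdag sc ip T (DMinus z) \<Longrightarrow> (\<omega>, sc (cnj z) \<omega>) \<in> sorth ip (A_T ip T)"
  by (auto simp: Fdag_def)

lemma ip_T_Fdag_DPlus:
  assumes ci: "complex_inner_space sc ip" and x: "x \<in> Kspace ip T"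
    and \<omega>: "\<omega> \<in> Fdag sc ip T (DPlus z)"
  shows "ip (T x) \<omega> = z * ip x \<omega>"
proof -
  have "cnj z * ip \<omega> x = ip \<omega> (T x)"
    using sorth_A_T_ip_eq[OF Fdag_DPlus_sorth[OF \<omega>] x]
    by (simp add: complex_inner_space_ip_scaleC_left[OF ci])
  then have "z * cnj (ip \<omega> x) = cnj (ip \<omega> (T x))"
    by (metis complex_cnj_cnj complex_cnj_mult)
  then show ?thesis
    by (simp add: complex_inner_space_ip_cnj_commute[OF ci, of _ \<omega>])
qed

lemma ip_Fdag_DMinus:
  assumes ci: "complex_inner_space sc ip" and x: "x \<in> Kspace ip T"
    and \<omega>: "\<omega> \<in> Fdag sc ip T (DMinus z)"
  shows "ip x \<omega> = z * ip (T x) \<omega>"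
proof -
  have "ip \<omega> x = cnj z * ip \<omega> (T x)"
    using sorth_A_T_ip_eq[OF Fdag_DMinus_sorth[OF \<omega>] x]
    by (simp add: complex_inner_space_ip_scaleC_left[OF ci])
  then have "cnj (ip \<omega> x) = z * cnj (ip \<omega> (T x))"
    by simp
  then show ?thesis
    by (simp add: complex_inner_space_ip_cnj_commute[OF ci, of _ \<omega>])
qed

lemma hat_T_DPlus:
  "complex_inner_space sc ip \<Longrightarrow> x \<in> Kspace ip T \<Longrightarrow>
    hat sc ip T (T x) (DPlus z) = (\<lambda>\<omega>. z * hat sc ip T x (DPlus z) \<omega>)"
  by (simp add: hat_def fun_eq_iff ip_T_Fdag_DPlus)

lemma hat_DMinus:
  "complex_inner_space sc ip \<Longrightarrow> x \<in> Kspace ip T \<Longrightarrow>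
    hat sc ip T x (DMinus z) = (\<lambda>\<omega>. z * hat sc ip T (T x) (DMinus z) \<omega>)"
  by (simp add: hat_def fun_eq_iff ip_Fdag_DMinus)

theorem lemma4p9:
  fixes sc :: "complex \<Rightarrow> 'h::ab_group_add \<Rightarrow> 'h"
    and ip :: "'h \<Rightarrow> 'h \<Rightarrow> complex"
    and T :: "'h \<Rightarrow> 'h"
    and x :: 'h
  assumes "sep_hilbert_space sc ip"
    and "contraction sc ip T"
    and "cnu sc ip T"
    and "x \<in> Kspace ip T"
  shows "(\<forall>z. cmod z < 1 \<longrightarrow>
            hat sc ip T (T x) (DPlus z) = (\<lambda>\<omega>. z * hat sc ip T x (DPlus z) \<omega>))
       \<and> (\<forall>z. cmod z < 1 \<and> z \<noteq> 0 \<longrightarrow>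
            hat sc ip T (T x) (DMinus z) = (\<lambda>\<omega>. hat sc ip T x (DMinus z) \<omega> / z))
       \<and> (\<forall>z. cmod z < 1 \<longrightarrow>
            hat sc ip T x (DMinus z) = (\<lambda>\<omega>. z * hat sc ip T (T x) (DMinus z) \<omega>))
       \<and> hat sc ip T x (DMinus 0) = (\<lambda>\<omega>. 0)"
proof -
  have ci: "complex_inner_space sc ip"
    using assms(1) unfolding sep_hilbert_space_def by blast
  note plus = hat_T_DPlus[OF ci assms(4)] and minus = hat_DMinus[OF ci assms(4)]
  have "hat sc ip T (T x) (DMinus z) = (\<lambda>\<omega>. hat sc ip T x (DMinus z) \<omega> / z)" if "z \<noteq> 0" for z
    using minus[of z] that by (simp add: fun_eq_iff)
  moreover have "hat sc ip T x (DMinus 0) = (\<lambda>\<omega>. 0)"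
    using minus[of 0] by simp
  ultimately show ?thesis
    using plus minus by blast
qed

end
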